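(* Let $G$ be a unimodular locally compact group with Haar measure $m$, and let $\nu$ be a lower translation bounded measure on $G$. Let $B_l\subseteq G$ be a compact symmetric unit neighborhood and $C_l$ a positive number such that $\nu(B_lx)\ge C_l$ for all $x\in G$. Then for every nonempty compact $A\subseteq G$, \[ \nu(B_l A)\ge \frac{C_l}{m(B_l^2)} \cdot m(A). \]
   Context: A measure is a positive Borel measure; $\nu$ is lower translation bounded if there exist $C>0$ and a compact symmetric unit neighborhood $B$ with $\inf_{x\in G}\nu(Bx)\ge C$. $B_l^2=B_lB_l$, and $B_lA=\{ba:b\in B_l,a\in A\}$. *)

theory Defs
  imports "HOL-Analysis.Analysis"
begin

text \<open>Groups are written additively (type class group_add, not necessarily
commutative): the paper's product b a is b + a, the unit is 0, inverse is uminus.\<close>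

definition topological_group :: "'a::{t2_space,group_add} itself \<Rightarrow> bool" where
  "topological_group _ \<longleftrightarrow>
     continuous_on UNIV (\<lambda>p::'a \<times> 'a. fst p + snd p) \<and>
     continuous_on UNIV (uminus :: 'a \<Rightarrow> 'a)"

definition locally_compact_group :: "'a::{t2_space,group_add} itself \<Rightarrow> bool" where
  "locally_compact_group T \<longleftrightarrow> topological_group T \<and> locally compact (UNIV :: 'a set)"

definition haar_measure :: "'a::{t2_space,group_add} measure \<Rightarrow> bool" where
  "haar_measure m \<longleftrightarrow>
     sets m = sets borel \<and>
     (\<forall>x. \<forall>A\<in>sets borel. emeasure m ((\<lambda>y. x + y) ` A) = emeasure m A) \<and>
     (\<forall>K. compact K \<longrightarrow> emeasure m K < \<infinity>) \<and>
     (\<forall>U. open U \<and> U \<noteq> {} \<longrightarrow> emeasure m U > 0) \<and>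
     (\<forall>A\<in>sets borel. emeasure m A = (INF U\<in>{U. open U \<and> A \<subseteq> U}. emeasure m U)) \<and>
     (\<forall>U. open U \<longrightarrow> emeasure m U = (SUP K\<in>{K. compact K \<and> K \<subseteq> U}. emeasure m K))"

definition unimodular_haar :: "'a::{t2_space,group_add} measure \<Rightarrow> bool" where
  "unimodular_haar m \<longleftrightarrow> haar_measure m \<and>
     (\<forall>x. \<forall>A\<in>sets borel. emeasure m ((\<lambda>y. y + x) ` A) = emeasure m A)"

definition compact_symmetric_unit_nbhd :: "'a::{t2_space,group_add} set \<Rightarrow> bool" where
  "compact_symmetric_unit_nbhd B \<longleftrightarrow> compact B \<and> uminus ` B = B \<and> 0 \<in> interior B"

definition set_times :: "'a::group_add set \<Rightarrow> 'a set \<Rightarrow> 'a set" where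
  "set_times B A = {b + a | b a. b \<in> B \<and> a \<in> A}"

definition lower_translation_bounded :: "'a::{t2_space,group_add} measure \<Rightarrow> bool" where
  "lower_translation_bounded \<nu> \<longleftrightarrow>
     (\<exists>C>0. \<exists>B. compact_symmetric_unit_nbhd B \<and>
        (\<forall>x. emeasure \<nu> ((\<lambda>b. b + x) ` B) \<ge> ennreal C))"

end

theory Submission
  imports Defs
begin

text \<open>Choose a finite set \<open>F \<subseteq> A\<close> whose right translates \<open>B x\<close> are pairwise disjoint and
which is maximal with this property. Each translate lies in \<open>B A\<close> and has \<open>\<nu>\<close>-measure at least
\<open>C\<close>, so \<open>card F * C \<le> \<nu>(B A)\<close>; this also bounds the size of such sets and makes a maximal one
exist when \<open>\<nu>(B A) < \<infinity>\<close>. By maximality every \<open>B a\<close> with \<open>a \<in> A\<close> meets some \<open>B x\<close>,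
\<open>x \<in> F\<close>, and as \<open>B\<close> is symmetric this puts \<open>a\<close> in \<open>B\<^sup>2 x\<close>. Right invariance of the Haar
measure then gives \<open>m(A) \<le> card F * m(B\<^sup>2)\<close>.\<close>

lemma set_times_eq_image: "set_times X Y = (\<lambda>p. fst p + snd p) ` (X \<times> Y)"
  unfolding set_times_def by force

lemma set_times_singleton: "set_times X {x} = (\<lambda>y. y + x) ` X"
  unfolding set_times_def by blast

lemma compact_set_times:
  assumes "topological_group TYPE('a::{t2_space,group_add})"
    and "compact X" and "compact Y"
  shows "compact (set_times X Y :: 'a set)"
proof -
  have "continuous_on (X \<times> Y) (\<lambda>p::'a \<times> 'a. fst p + snd p)"
    using assms(1) continuous_on_subset unfolding topological_group_def by blast
  then show ?thesis
    unfolding set_times_eq_image by (intro compact_continuous_image compact_Times assms(2,3))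
qed

lemma continuous_on_add_right:
  assumes "topological_group TYPE('a::{t2_space,group_add})"
  shows "continuous_on S (\<lambda>y::'a. y + x)"
proof -
  have "continuous_on UNIV (\<lambda>p::'a \<times> 'a. fst p + snd p)"
    using assms unfolding topological_group_def by blast
  moreover have "continuous_on S (\<lambda>y. (y, x))"
    by (intro continuous_intros)
  ultimately have "continuous_on S ((\<lambda>p. fst p + snd p) \<circ> (\<lambda>y. (y, x)))"
    by (intro continuous_on_compose) (auto elim: continuous_on_subset)
  then show ?thesis
    by (simp add: o_def)
qed

lemma borel_translate_right:
  assumes "topological_group TYPE('a::{t2_space,group_add})"
    and "D \<in> sets borel"
  shows "(\<lambda>y::'a. y + x) ` D \<in> sets borel"
proof -
  have "(\<lambda>y. y + x) ` D = (\<lambda>y. y - x) -` D"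
    by (force simp: image_iff)
  moreover have "(\<lambda>y::'a. y - x) \<in> borel_measurable borel"
    unfolding diff_conv_add_uminus
    by (intro borel_measurable_continuous_onI continuous_on_add_right assms(1))
  ultimately show ?thesis
    using measurable_sets_borel[OF _ assms(2)] by simp
qed

lemma right_translates_meet_imp_mem:
  fixes B :: "'a::group_add set"
  assumes "uminus ` B = B"
    and "(\<lambda>b. b + a) ` B \<inter> (\<lambda>b. b + x) ` B \<noteq> {}"
  shows "a \<in> (\<lambda>y. y + x) ` set_times B B"
proof -
  obtain b b' where "b \<in> B" "b' \<in> B" and eq: "b + a = b' + x"
    using assms(2) by blast
  then have "- b + b' \<in> set_times B B"
    using assms(1) unfolding set_times_def by blast
  moreover have "a = (- b + b') + x"
    using eq by (metis add.assoc minus_add_cancel)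
  ultimately show ?thesis by blast
qed

lemma exists_maximal_finite_disjoint_subfamily:
  fixes T :: "'i \<Rightarrow> 'a set"
  assumes bounded: "\<And>F. F \<subseteq> A \<Longrightarrow> finite F \<Longrightarrow> disjoint_family_on T F \<Longrightarrow> card F \<le> N"
    and nonempty: "\<And>a. a \<in> A \<Longrightarrow> T a \<noteq> {}"
  obtains F where "F \<subseteq> A" "finite F" "disjoint_family_on T F"
    and "\<And>a. a \<in> A \<Longrightarrow> \<exists>x\<in>F. T a \<inter> T x \<noteq> {}"
proof -
  let ?P = "\<lambda>F. F \<subseteq> A \<and> finite F \<and> disjoint_family_on T F"
  have "?P {}"
    by (simp add: disjoint_family_on_def)
  moreover have "\<forall>F. ?P F \<longrightarrow> card F < Suc N"
    using bounded by (simp add: less_Suc_eq_le)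
  ultimately obtain F where F: "?P F" and greatest: "\<And>F'. ?P F' \<Longrightarrow> card F' \<le> card F"
    using ex_has_greatest_nat[of ?P "{}" card "Suc N"] by blast
  have "\<exists>x\<in>F. T a \<inter> T x \<noteq> {}" if "a \<in> A" for a
  proof (cases "a \<in> F")
    case True
    then show ?thesis using nonempty[OF that] by blast
  next
    case False
    then have "card (insert a F) > card F"
      using F by simp
    then have "\<not> disjoint_family_on T (insert a F)"
      using greatest[of "insert a F"] F that by auto
    then show ?thesis
      using F False unfolding disjoint_family_on_def by (metis Int_commute insert_iff)
  qed
  with F that show thesis by blast
qed

lemma card_mult_le_emeasure_of_disjoint_family:
  assumes "finite F" "disjoint_family_on T F" "E \<in> sets M"
    and "\<And>x. x \<in> F \<Longrightarrow> T x \<in> sets M"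
    and "\<And>x. x \<in> F \<Longrightarrow> c \<le> emeasure M (T x)"
    and "\<And>x. x \<in> F \<Longrightarrow> T x \<subseteq> E"
  shows "of_nat (card F) * c \<le> emeasure M E"
proof -
  have "of_nat (card F) * c = (\<Sum>x\<in>F. c)"
    by simp
  also have "\<dots> \<le> (\<Sum>x\<in>F. emeasure M (T x))"
    using assms(5) by (rule sum_mono)
  also have "\<dots> = emeasure M (\<Union>x\<in>F. T x)"
    using assms(1,2,4) by (intro sum_emeasure) auto
  also have "\<dots> \<le> emeasure M E"
    using assms(3,6) by (intro emeasure_mono) auto
  finally show ?thesis .
qed

lemma ennreal_of_nat_mult_le_bounded:
  assumes "e \<noteq> \<infinity>" and "c > 0"
  obtains N :: nat where "\<And>n. of_nat n * ennreal c \<le> e \<Longrightarrow> n \<le> N"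
proof -
  obtain r where r: "e = ennreal r" "r \<ge> 0"
    using assms(1) ennreal_cases[of e] by auto
  have "n \<le> nat \<lceil>r / c\<rceil>" if "of_nat n * ennreal c \<le> e" for n :: nat
  proof -
    have "real n * c \<le> r"
      using that r assms(2)
      by (simp add: ennreal_of_nat_eq_real_of_nat ennreal_mult'[symmetric] ennreal_le_iff)
    then have "real n \<le> r / c"
      using assms(2) by (simp add: field_simps)
    then show ?thesis
      by linarith
  qed
  then show thesis
    using that by blast
qed

lemma exists_maximal_finite_packing:
  fixes T :: "'i \<Rightarrow> 'a set"
  assumes "emeasure M E \<noteq> \<infinity>" and "E \<in> sets M" and "c > 0"
    and "\<And>x. x \<in> A \<Longrightarrow> T x \<in> sets M"
    and "\<And>x. x \<in> A \<Longrightarrow> ennreal c \<le> emeasure M (T x)"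
    and "\<And>x. x \<in> A \<Longrightarrow> T x \<subseteq> E"
  obtains F where "F \<subseteq> A" "finite F" "of_nat (card F) * ennreal c \<le> emeasure M E"
    and "\<And>a. a \<in> A \<Longrightarrow> \<exists>x\<in>F. T a \<inter> T x \<noteq> {}"
proof -
  have packing: "of_nat (card F) * ennreal c \<le> emeasure M E"
    if "F \<subseteq> A" "finite F" "disjoint_family_on T F" for F
    using that assms(2,4-6) by (intro card_mult_le_emeasure_of_disjoint_family[OF that(2,3)]) blast+
  obtain N where N: "\<And>n. of_nat n * ennreal c \<le> emeasure M E \<Longrightarrow> n \<le> N"
    using ennreal_of_nat_mult_le_bounded[OF assms(1,3)] by blast
  have "T a \<noteq> {}" if "a \<in> A" for a
    using assms(5)[OF that] assms(3) by auto
  with N packing obtain F where "F \<subseteq> A" "finite F" "disjoint_family_on T F"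
    and "\<And>a. a \<in> A \<Longrightarrow> \<exists>x\<in>F. T a \<inter> T x \<noteq> {}"
    by (metis exists_maximal_finite_disjoint_subfamily)
  with packing that show thesis
    by blast
qed

lemma emeasure_le_card_mult_of_cover_by_right_translates:
  fixes m :: "'a::{t2_space,group_add} measure"
  assumes "topological_group TYPE('a)" and "sets m = sets borel"
    and right_invariant: "\<forall>x. \<forall>X\<in>sets borel. emeasure m ((\<lambda>y. y + x) ` X) = emeasure m X"
    and "D \<in> sets borel" and "finite F"
    and cover: "A \<subseteq> (\<Union>x\<in>F. (\<lambda>y. y + x) ` D)"
  shows "emeasure m A \<le> of_nat (card F) * emeasure m D"
proof -
  have translate: "(\<lambda>y. y + x) ` D \<in> sets m" for x
    using borel_translate_right[OF assms(1,4)] assms(2) by simp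
  have "emeasure m A \<le> emeasure m (\<Union>x\<in>F. (\<lambda>y. y + x) ` D)"
    using cover assms(5) translate by (intro emeasure_mono) auto
  also have "\<dots> \<le> (\<Sum>x\<in>F. emeasure m ((\<lambda>y. y + x) ` D))"
    using assms(5) translate by (intro emeasure_subadditive_finite) auto
  also have "\<dots> = of_nat (card F) * emeasure m D"
    using right_invariant assms(4) by simp
  finally show ?thesis .
qed

lemma ennreal_divide_mult_le:
  fixes a c d k :: ennreal
  assumes "a \<le> k * d"
  shows "c / d * a \<le> k * c"
proof -
  have "c / d * d \<le> c"
    by (metis divide_le_posI_ennreal dual_order.order_iff_strict ennreal_divide_times
        le_zero_eq mult.right_neutral mult_left_le not_less_iff_gr_or_eq)
  have "c / d * a \<le> c / d * (k * d)"
    using assms by (rule mult_left_mono) simp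
  also have "\<dots> = k * (c / d * d)"
    by (simp add: ac_simps)
  also have "\<dots> \<le> k * c"
    using \<open>c / d * d \<le> c\<close> by (rule mult_left_mono) simp
  finally show ?thesis .
qed

theorem lemma2p5:
  fixes m \<nu> :: "'a::{t2_space,group_add} measure"
    and B A :: "'a set" and C :: real
  assumes "locally_compact_group TYPE('a)"
    and "unimodular_haar m"
    and "sets \<nu> = sets borel"
    and "lower_translation_bounded \<nu>"
    and "compact_symmetric_unit_nbhd B"
    and "C > 0"
    and "\<forall>x. emeasure \<nu> ((\<lambda>b. b + x) ` B) \<ge> ennreal C"
    and "compact A" and "A \<noteq> {}"
  shows "emeasure \<nu> (set_times B A) \<ge> ennreal C / emeasure m (set_times B B) * emeasure m A"
proof -
  have grp: "topological_group TYPE('a)"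
    using assms(1) unfolding locally_compact_group_def by blast
  have "compact B" and symmetric: "uminus ` B = B" and "0 \<in> B"
    using assms(5) interior_subset unfolding compact_symmetric_unit_nbhd_def by blast+
  have borel_compact: "K \<in> sets borel" if "compact K" for K :: "'a set"
    using that by (simp add: compact_imp_closed borel_closed)
  show ?thesis
  proof (cases "emeasure \<nu> (set_times B A) = \<infinity>")
    case True
    then show ?thesis by simp
  next
    case False
    obtain F where F: "F \<subseteq> A" "finite F"
      and packing: "of_nat (card F) * ennreal C \<le> emeasure \<nu> (set_times B A)"
      and maximal: "\<And>a. a \<in> A \<Longrightarrow> \<exists>x\<in>F. (\<lambda>b. b + a) ` B \<inter> (\<lambda>b. b + x) ` B \<noteq> {}"
    proof (rule exists_maximal_finite_packing[OF False _ assms(6), of A "\<lambda>x. (\<lambda>b. b + x) ` B"])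
      show "set_times B A \<in> sets \<nu>" "(\<lambda>b. b + x) ` B \<in> sets \<nu>" for x
        using compact_set_times[OF grp] \<open>compact B\<close> assms(3,8) borel_compact
        unfolding set_times_singleton[symmetric] by auto
      show "(\<lambda>b. b + x) ` B \<subseteq> set_times B A" if "x \<in> A" for x
        using that unfolding set_times_def by blast
    qed (use assms(7) that in auto)
    have "A \<subseteq> (\<Union>x\<in>F. (\<lambda>y. y + x) ` set_times B B)"
      using maximal right_translates_meet_imp_mem[OF symmetric] by blast
    then have "emeasure m A \<le> of_nat (card F) * emeasure m (set_times B B)"
      using assms(2) grp compact_set_times[OF grp \<open>compact B\<close> \<open>compact B\<close>] borel_compact F(2)
      unfolding unimodular_haar_def haar_measure_def
      by (intro emeasure_le_card_mult_of_cover_by_right_translates) auto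
    then have "ennreal C / emeasure m (set_times B B) * emeasure m A \<le> of_nat (card F) * ennreal C"
      by (rule ennreal_divide_mult_le)
    also have "\<dots> \<le> emeasure \<nu> (set_times B A)"
      by (fact packing)
    finally show ?thesis .
  qed
qed

end
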